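(* Assume (A2) and (A3), and work in the dynamic Lanczos setting. Let $2\le j\le m$, assume each $T_n$ ($1\le n\le j$) has distinct eigenvalues, and let $(\mu_i^{(j)},y_i^{(j)})$ be an eigenpair of $T_j$ with $(y_i^{(j)})^\top R_jy_i^{(j)}\neq 0$. Then there exist integers $s,n$ with $1\le s\le n<j$ such that $$\big|\mu_i^{(j)}-\mu_s^{(n)}\big|\le\frac{2j^2L_{gyy}\varepsilon_j}{\sqrt3\,\big|(y_i^{(j)})^\top R_jy_i^{(j)}\big|}.$$
   Context: Let $f,g:\mathbb{R}^{d_x}\times\mathbb{R}^{d_y}\to\mathbb{R}$ be twice continuously differentiable; norms are Euclidean/spectral and $\|(x,y)\|:=(\|x\|^2+\|y\|^2)^{1/2}$. (A2): $\nabla_xg,\nabla_yg$ are $L_{gx}$-, $L_{gy}$-Lipschitz and $\nabla^2_{xy}g,\nabla^2_{yy}g$ are $L_{gxy}$-, $L_{gyy}$-Lipschitz. (A3): $g(x,\cdot)$ is $\mu_g$-strongly convex for every $x$, $\mu_g>0$; $y^*(x):=\arg\min_y g(x,y)$. Dynamic Lanczos setting: fix $x_1,\dots,x_m\in\mathbb{R}^{d_x}$, $y_1,\dots,y_m\in\mathbb{R}^{d_y}$, $A_i:=\nabla^2_{yy}g(x_i,y_i)$, $A_i^*:=\nabla^2_{yy}g(x_i,y^*(x_i))$, $\bar b\ne0$. Set $q_0=0$, $\beta_1=0$, $q_1=\bar b/\|\bar b\|$, and $u_i=A_iq_i-\beta_iq_{i-1}$, $\alpha_i=q_i^\top u_i$,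 $\omega_i=u_i-\alpha_iq_i$, $\beta_{i+1}=\|\omega_i\|$, $q_{i+1}=\omega_i/\beta_{i+1}$ (assume $\beta_{i+1}\ne0$). $Q_j:=[q_1,\dots,q_j]$; $T_j$ is the $j\times j$ symmetric tridiagonal matrix with diagonal $\alpha_1,\dots,\alpha_j$ and off-diagonal $\beta_2,\dots,\beta_j$. $R_j$ is the strictly upper triangular matrix with $Q_j^\top Q_j=I_j+R_j+R_j^\top$. For each $n$, $T_nY^{(n)}=Y^{(n)}\operatorname{diag}(\mu_1^{(n)},\dots,\mu_n^{(n)})$ with $Y^{(n)}=[y_1^{(n)},\dots,y_n^{(n)}]$ orthogonal and $\mu_1^{(n)}>\dots>\mu_n^{(n)}$. $\varepsilon_{st}:=(1+L_{gx}/\mu_g)\|x_s-x_t\|+\|y_s-y^*(x_s)\|$, $\varepsilon_j:=\max_{1\le s,t\le j}\varepsilon_{st}$. *)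

theory Defs
  imports "HOL-Analysis.Analysis"
begin

text \<open>Dynamic Lanczos iteration.  The state at index i (i \<ge> 1) is the triple
  (q_{i-1}, q_i, beta_i); index 0 gives q_0 = 0.  A i is the matrix A_i (as a linear map).\<close>

fun lanczos :: "(nat \<Rightarrow> 'a::real_inner \<Rightarrow> 'a) \<Rightarrow> 'a \<Rightarrow> nat \<Rightarrow> 'a \<times> 'a \<times> real" where
  "lanczos A b 0 = (0, 0, 0)"
| "lanczos A b (Suc 0) = (0, b /\<^sub>R norm b, 0)"
| "lanczos A b (Suc (Suc i)) =
     (case lanczos A b (Suc i) of (qp, q, bt) \<Rightarrow>
        let u = A (Suc i) q - bt *\<^sub>R qp;
            al = inner q u;
            w = u - al *\<^sub>R q;
            bn = norm w
        in (q, w /\<^sub>R bn, bn))"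

definition lz_q :: "(nat \<Rightarrow> 'a::real_inner \<Rightarrow> 'a) \<Rightarrow> 'a \<Rightarrow> nat \<Rightarrow> 'a" where
  "lz_q A b i = fst (snd (lanczos A b i))"

definition lz_beta :: "(nat \<Rightarrow> 'a::real_inner \<Rightarrow> 'a) \<Rightarrow> 'a \<Rightarrow> nat \<Rightarrow> real" where
  "lz_beta A b i = snd (snd (lanczos A b i))"

definition lz_alpha :: "(nat \<Rightarrow> 'a::real_inner \<Rightarrow> 'a) \<Rightarrow> 'a \<Rightarrow> nat \<Rightarrow> real" where
  "lz_alpha A b i = (case lanczos A b i of (qp, q, bt) \<Rightarrow> inner q (A i q - bt *\<^sub>R qp))"

text \<open>Entries (k,l), 1 \<le> k,l \<le> n, of the tridiagonal T_n (T_n is the leading n\<times>n block).\<close>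
definition lz_T :: "(nat \<Rightarrow> 'a::real_inner \<Rightarrow> 'a) \<Rightarrow> 'a \<Rightarrow> nat \<Rightarrow> nat \<Rightarrow> real" where
  "lz_T A b k l =
     (if k = l then lz_alpha A b k
      else if k = Suc l \<or> l = Suc k then lz_beta A b (max k l) else 0)"

text \<open>Entries (k,l) of the strictly upper triangular R_j with Q_j^T Q_j = I + R_j + R_j^T.\<close>
definition lz_R :: "(nat \<Rightarrow> 'a::real_inner \<Rightarrow> 'a) \<Rightarrow> 'a \<Rightarrow> nat \<Rightarrow> nat \<Rightarrow> real" where
  "lz_R A b k l = (if k < l then inner (lz_q A b k) (lz_q A b l) else 0)"

definition ystar :: "('x \<Rightarrow> 'y \<Rightarrow> real) \<Rightarrow> 'x \<Rightarrow> 'y" where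
  "ystar g x = (THE y. \<forall>y'. g x y \<le> g x y')"

definition eps_st :: "('x \<Rightarrow> 'y \<Rightarrow> real) \<Rightarrow> real \<Rightarrow> real \<Rightarrow> (nat \<Rightarrow> 'x::real_normed_vector)
    \<Rightarrow> (nat \<Rightarrow> 'y::real_normed_vector) \<Rightarrow> nat \<Rightarrow> nat \<Rightarrow> real" where
  "eps_st g Lgx mug xs ys s t =
     (1 + Lgx / mug) * norm (xs s - xs t) + norm (ys s - ystar g (xs s))"

definition eps_j :: "('x \<Rightarrow> 'y \<Rightarrow> real) \<Rightarrow> real \<Rightarrow> real \<Rightarrow> (nat \<Rightarrow> 'x::real_normed_vector)
    \<Rightarrow> (nat \<Rightarrow> 'y::real_normed_vector) \<Rightarrow> nat \<Rightarrow> real" where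
  "eps_j g Lgx mug xs ys j = Max {eps_st g Lgx mug xs ys s t | s t. s \<in> {1..j} \<and> t \<in> {1..j}}"

end

theory Submission
  imports Defs "Jordan_Normal_Form.Determinant"
begin

(*
  The argument follows Paige's rounding-error analysis of the Lanczos process, with the drift
  of the matrices A_k playing the role of rounding errors.  Let G = Q^T Q be the Gram matrix of the
  Lanczos vectors and C_kl = <q_k, A_l q_l>; by the three-term recurrence C is G times the
  (infinite) tridiagonal matrix T.  C would be symmetric if all A_k were equal; instead
  C_kl - C_lk = <q_k, (A_l - A_k) q_l>, and Lipschitz continuity of the Hessian and of y^* bounds
  this by 2 L_gyy eps_j.  For an eigenvector v of T_n the commutator R T - T R (R the strict upper
  part of G) has v^T (R T - T R) v = 0, which identifies beta_{n+1} v_n <v, G e_{n+1}> with the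
  strict-upper part of v^T (C - C^T) v, of size at most n L_gyy eps_j.  Expanding
  y^T R_j y column by column in the eigenbases of T_1, ..., T_{j-1} gives
  y^T R_j y = sum_n sum_s y_{n+1}^2 S_ns / (mu_i^(j) - mu_s^(n)), and the smallest gap then satisfies
  gap * |y^T R_j y| <= j^2 L_gyy eps_j, which is stronger than the claim since 2/sqrt 3 > 1.
*)

section \<open>Symmetry of second derivatives\<close>

lemma has_real_derivative_along_line:
  fixes f :: "'a::real_inner \<Rightarrow> real"
  assumes "\<And>y. (f has_derivative (\<lambda>h. inner (G y) h)) (at y)"
  shows "((\<lambda>s. f (c + s *\<^sub>R d)) has_real_derivative inner (G (c + s *\<^sub>R d)) d) (at s)"
proof -
  have line: "((\<lambda>s. c + s *\<^sub>R d) has_derivative (\<lambda>h. h *\<^sub>R d)) (at s)"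
    by (auto intro!: derivative_eq_intros)
  show ?thesis
    using has_derivative_compose[OF line assms]
    unfolding has_real_derivative_iff_has_vector_derivative has_vector_derivative_def by simp
qed

lemma inner_has_real_derivative_along_line:
  fixes G :: "'a::real_inner \<Rightarrow> 'a"
  assumes "\<And>y. (G has_derivative blinfun_apply (H y)) (at y)"
  shows "((\<lambda>s. inner (G (c + s *\<^sub>R d)) a) has_real_derivative
           inner (blinfun_apply (H (c + s *\<^sub>R d)) d) a) (at s)"
proof -
  have line: "((\<lambda>s. c + s *\<^sub>R d) has_derivative (\<lambda>h. h *\<^sub>R d)) (at s)"
    by (auto intro!: derivative_eq_intros)
  show ?thesis
    using has_derivative_inner_left[OF has_derivative_compose[OF line assms]]
    unfolding has_real_derivative_iff_has_vector_derivative has_vector_derivative_def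
    by (simp add: blinfun.scaleR_right)
qed

lemma second_difference_mean_value:
  fixes f :: "'a::real_inner \<Rightarrow> real"
  assumes fd: "\<And>y. (f has_derivative (\<lambda>h. inner (G y) h)) (at y)"
    and Gd: "\<And>y. (G has_derivative blinfun_apply (H y)) (at y)"
    and t: "0 < t"
  shows "\<exists>p. norm (p - y) \<le> t * (norm a + norm b) \<and>
     f (y + t *\<^sub>R a + t *\<^sub>R b) - f (y + t *\<^sub>R a) - f (y + t *\<^sub>R b) + f y
       = t\<^sup>2 * inner (blinfun_apply (H p) b) a"
proof -
  define \<psi> where "\<psi> s = f ((y + t *\<^sub>R b) + s *\<^sub>R a) - f (y + s *\<^sub>R a)" for s
  have "DERIV \<psi> s :> inner (G ((y + t *\<^sub>R b) + s *\<^sub>R a)) a - inner (G (y + s *\<^sub>R a)) a" for s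
    unfolding \<psi>_def by (intro DERIV_diff has_real_derivative_along_line[OF fd])
  from MVT2[OF t this] obtain \<sigma> where \<sigma>: "0 < \<sigma>" "\<sigma> < t" and e1: "\<psi> t - \<psi> 0 =
      (t - 0) * (inner (G ((y + t *\<^sub>R b) + \<sigma> *\<^sub>R a)) a - inner (G (y + \<sigma> *\<^sub>R a)) a)"
    by blast
  define \<kappa> where "\<kappa> r = inner (G ((y + \<sigma> *\<^sub>R a) + r *\<^sub>R b)) a" for r
  have "DERIV \<kappa> r :> inner (blinfun_apply (H ((y + \<sigma> *\<^sub>R a) + r *\<^sub>R b)) b) a" for r
    unfolding \<kappa>_def by (rule inner_has_real_derivative_along_line[OF Gd])
  from MVT2[OF t this] obtain \<rho> where \<rho>: "0 < \<rho>" "\<rho> < t" and e2: "\<kappa> t - \<kappa> 0 =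
      (t - 0) * inner (blinfun_apply (H ((y + \<sigma> *\<^sub>R a) + \<rho> *\<^sub>R b)) b) a"
    by blast
  have "norm (\<sigma> *\<^sub>R a + \<rho> *\<^sub>R b) \<le> \<sigma> * norm a + \<rho> * norm b"
    using norm_triangle_ineq[of "\<sigma> *\<^sub>R a" "\<rho> *\<^sub>R b"] \<sigma> \<rho> by simp
  also have "\<dots> \<le> t * (norm a + norm b)"
    using \<sigma> \<rho> by (simp add: distrib_left add_mono mult_right_mono)
  finally have near: "norm (((y + \<sigma> *\<^sub>R a) + \<rho> *\<^sub>R b) - y) \<le> t * (norm a + norm b)" by simp
  have e3: "\<psi> t - \<psi> 0 = f (y + t *\<^sub>R a + t *\<^sub>R b) - f (y + t *\<^sub>R a) - f (y + t *\<^sub>R b) + f y"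
    unfolding \<psi>_def by (simp add: algebra_simps)
  have e4: "inner (G ((y + t *\<^sub>R b) + \<sigma> *\<^sub>R a)) a - inner (G (y + \<sigma> *\<^sub>R a)) a = \<kappa> t - \<kappa> 0"
    unfolding \<kappa>_def by (simp add: algebra_simps)
  show ?thesis
    using near e1 e2 e3 e4 by (intro exI[of _ "(y + \<sigma> *\<^sub>R a) + \<rho> *\<^sub>R b"]) (simp add: power2_eq_square)
qed

lemma isCont_eq_of_near_equal_values:
  fixes F F' :: "'a::real_normed_vector \<Rightarrow> real"
  assumes "isCont F y" "isCont F' y"
    and near: "\<And>t. 0 < t \<Longrightarrow> \<exists>p p'. norm (p - y) \<le> t * K \<and> norm (p' - y) \<le> t * K \<and> F p = F' p'"
  shows "F y = F' y"
proof -
  obtain p p' where pp: "\<And>t. 0 < t \<Longrightarrow> norm (p t - y) \<le> t * K \<and> norm (p' t - y) \<le> t * K \<and> F (p t) = F' (p' t)"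
    using near by metis
  have K: "((\<lambda>t. t * K) \<longlongrightarrow> 0) (at_right 0)"
    by (auto intro!: tendsto_eq_intros)
  have near_ev: "\<forall>\<^sub>F t in at_right 0. norm (p t - y) \<le> t * K \<and> norm (p' t - y) \<le> t * K"
    using eventually_at_right_less[of 0] by (rule eventually_mono) (use pp in auto)
  have "((\<lambda>t. p t - y) \<longlongrightarrow> 0) (at_right 0)"
    by (rule Lim_null_comparison[OF eventually_mono[OF near_ev conjunct1] K])
  then have F: "((\<lambda>t. F (p t)) \<longlongrightarrow> F y) (at_right 0)"
    by (intro isCont_tendsto_compose[OF assms(1)]) (simp add: LIM_zero_iff)
  have "((\<lambda>t. p' t - y) \<longlongrightarrow> 0) (at_right 0)"
    by (rule Lim_null_comparison[OF eventually_mono[OF near_ev conjunct2] K])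
  then have F': "((\<lambda>t. F' (p' t)) \<longlongrightarrow> F' y) (at_right 0)"
    by (intro isCont_tendsto_compose[OF assms(2)]) (simp add: LIM_zero_iff)
  have "\<forall>\<^sub>F t in at_right 0. F (p t) = F' (p' t)"
    using eventually_at_right_less[of 0] by (rule eventually_mono) (use pp in auto)
  with F have "((\<lambda>t. F' (p' t)) \<longlongrightarrow> F y) (at_right 0)"
    by (rule Lim_transform_eventually)
  with F' show ?thesis
    by (intro tendsto_unique[OF trivial_limit_at_right_real])
qed

(* The second difference at scale t equals both t^2 <H p b, a> and t^2 <H p' a, b>, with p, p' within
   O(t) of y. *)
lemma hessian_symmetric:
  fixes f :: "'a::real_inner \<Rightarrow> real"
  assumes fd: "\<And>y. (f has_derivative (\<lambda>h. inner (G y) h)) (at y)"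
    and Gd: "\<And>y. (G has_derivative blinfun_apply (H y)) (at y)"
    and Hc: "continuous_on UNIV H"
  shows "inner (blinfun_apply (H y) b) a = inner (blinfun_apply (H y) a) b"
proof (rule isCont_eq_of_near_equal_values[where K="norm a + norm b"
      and F="\<lambda>p. inner (blinfun_apply (H p) b) a" and F'="\<lambda>p. inner (blinfun_apply (H p) a) b"])
  have H: "isCont H y" using Hc by (simp add: continuous_on_eq_continuous_at)
  show "isCont (\<lambda>p. inner (blinfun_apply (H p) b) a) y" by (intro continuous_intros H)
  show "isCont (\<lambda>p. inner (blinfun_apply (H p) a) b) y" by (intro continuous_intros H)
next
  fix t :: real assume t: "0 < t"
  obtain p where p: "norm (p - y) \<le> t * (norm a + norm b)" and
     "f (y + t *\<^sub>R a + t *\<^sub>R b) - f (y + t *\<^sub>R a) - f (y + t *\<^sub>R b) + f y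
       = t\<^sup>2 * inner (blinfun_apply (H p) b) a"
    using second_difference_mean_value[OF fd Gd t] by blast
  moreover obtain p' where p': "norm (p' - y) \<le> t * (norm b + norm a)" and
     "f (y + t *\<^sub>R b + t *\<^sub>R a) - f (y + t *\<^sub>R b) - f (y + t *\<^sub>R a) + f y
       = t\<^sup>2 * inner (blinfun_apply (H p') a) b"
    using second_difference_mean_value[OF fd Gd t] by blast
  ultimately have "t\<^sup>2 * inner (blinfun_apply (H p) b) a = t\<^sup>2 * inner (blinfun_apply (H p') a) b"
    by (simp add: algebra_simps)
  then have "inner (blinfun_apply (H p) b) a = inner (blinfun_apply (H p') a) b"
    using t by simp
  with p p' show "\<exists>p p'. norm (p - y) \<le> t * (norm a + norm b) \<and> norm (p' - y) \<le> t * (norm a + norm b) \<and>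
      inner (blinfun_apply (H p) b) a = inner (blinfun_apply (H p') a) b"
    by (auto simp: add.commute)
qed

lemma has_derivative_partial_fst:
  fixes g :: "'x::real_normed_vector \<Rightarrow> 'y::real_normed_vector \<Rightarrow> 'z::real_normed_vector"
  assumes "((\<lambda>p. g (fst p) (snd p)) has_derivative D) (at (x, y))"
  shows "((\<lambda>x'. g x' y) has_derivative (\<lambda>h. D (h, 0))) (at x)"
proof -
  have "((\<lambda>x'. (x', y)) has_derivative (\<lambda>h. (h, 0))) (at x)"
    by (auto intro!: derivative_eq_intros)
  from has_derivative_compose[OF this assms] show ?thesis by simp
qed

lemma has_derivative_partial_snd:
  fixes g :: "'x::real_normed_vector \<Rightarrow> 'y::real_normed_vector \<Rightarrow> 'z::real_normed_vector"
  assumes "((\<lambda>p. g (fst p) (snd p)) has_derivative D) (at (x, y))"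
  shows "(g x has_derivative (\<lambda>h. D (0, h))) (at y)"
proof -
  have "((\<lambda>y'. (x, y')) has_derivative (\<lambda>h. (0, h))) (at y)"
    by (auto intro!: derivative_eq_intros)
  from has_derivative_compose[OF this assms] show ?thesis by simp
qed

lemma partial_hessian_snd_symmetric:
  fixes g :: "'x::euclidean_space \<Rightarrow> 'y::euclidean_space \<Rightarrow> real"
  assumes g_diff: "\<And>x y. ((\<lambda>p. g (fst p) (snd p)) has_derivative
                      (\<lambda>h. inner (gx x y) (fst h) + inner (gy x y) (snd h))) (at (x, y))"
    and gy_diff: "\<And>x y. ((\<lambda>p. gy (fst p) (snd p)) has_derivative
                      (\<lambda>h. blinfun_apply (Dyx x y) (fst h) + blinfun_apply (Dyy x y) (snd h))) (at (x, y))"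
    and Dyy_cont: "continuous_on UNIV (\<lambda>p. Dyy (fst p) (snd p))"
  shows "inner (blinfun_apply (Dyy x y) u) v = inner u (blinfun_apply (Dyy x y) v)"
proof -
  have fd: "(g x has_derivative (\<lambda>h. inner (gy x y') h)) (at y')" for y'
    using has_derivative_partial_snd[OF g_diff[of x y']] by simp
  have Gd: "(gy x has_derivative blinfun_apply (Dyy x y')) (at y')" for y'
    using has_derivative_partial_snd[OF gy_diff[of x y']] by (simp add: blinfun.zero_right)
  have Hc: "continuous_on UNIV (Dyy x)"
    using continuous_on_compose2[OF Dyy_cont continuous_on_Pair[OF continuous_on_const continuous_on_id]]
    by simp
  show ?thesis using hessian_symmetric[OF fd Gd Hc, of y v u] by (simp add: inner_commute)
qed

section \<open>The strongly convex lower-level problem\<close>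

lemma strongly_convex_quadratic_growth:
  fixes G :: "'y::real_inner \<Rightarrow> real"
  assumes cv: "convex_on UNIV (\<lambda>y. G y - mu / 2 * (norm y)\<^sup>2)"
    and min: "\<forall>y. G y0 \<le> G y"
  shows "G y0 + mu / 4 * (norm (y - y0))\<^sup>2 \<le> G y"
proof -
  let ?h = "\<lambda>y. G y - mu / 2 * (norm y)\<^sup>2"
  let ?m = "(1 - 1/2) *\<^sub>R y0 + (1/2) *\<^sub>R y"
  have c: "?h ?m \<le> (1 - 1/2) * ?h y0 + (1/2) * ?h y"
    using convex_onD[OF cv, of "1/2" y0 y] by simp
  have m: "(norm ?m)\<^sup>2 = (norm y0)\<^sup>2 / 2 + (norm y)\<^sup>2 / 2 - (norm (y - y0))\<^sup>2 / 4"
    unfolding power2_norm_eq_inner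
    by (simp add: inner_add_left inner_add_right inner_diff_left inner_diff_right inner_commute
        algebra_simps add_divide_distrib diff_divide_distrib)
  have "mu / 2 * (norm ?m)\<^sup>2 =
      mu / 4 * (norm y0)\<^sup>2 + mu / 4 * (norm y)\<^sup>2 - mu / 8 * (norm (y - y0))\<^sup>2"
    unfolding m by (simp add: algebra_simps)
  moreover have "G y0 \<le> G ?m" using min by blast
  ultimately show ?thesis using c by (simp add: algebra_simps)
qed

(* m is the minimum of G y - mu/2 |y|^2 on the unit sphere; the bound is convexity of that function
   along the ray through y. *)
lemma strongly_convex_ray_bound:
  fixes G :: "'y::euclidean_space \<Rightarrow> real"
  assumes cont: "continuous_on UNIV G"
    and cv: "convex_on UNIV (\<lambda>y. G y - mu / 2 * (norm y)\<^sup>2)"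
  obtains m where "\<And>y. 1 \<le> norm y \<Longrightarrow> G 0 + norm y * (m - G 0) + mu / 2 * (norm y)\<^sup>2 \<le> G y"
proof -
  let ?h = "\<lambda>y. G y - mu / 2 * (norm y)\<^sup>2"
  obtain e :: 'y where "e \<in> Basis" using nonempty_Basis by blast
  then have "sphere (0::'y) 1 \<noteq> {}" by (auto simp: norm_Basis)
  moreover have "continuous_on (sphere 0 1) ?h"
    using cont by (auto intro!: continuous_intros intro: continuous_on_subset)
  ultimately obtain u0 where u0: "\<forall>u\<in>sphere 0 1. ?h u0 \<le> ?h u"
    using continuous_attains_inf[OF compact_sphere] by blast
  have "G 0 + norm y * (?h u0 - G 0) + mu / 2 * (norm y)\<^sup>2 \<le> G y" if y: "1 \<le> norm y" for y
  proof -
    define n where "n = norm y"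
    have n: "0 < n" "1 \<le> n" using y by (auto simp: n_def)
    have "?h ((1 - 1/n) *\<^sub>R 0 + (1/n) *\<^sub>R y) \<le> (1 - 1/n) * ?h 0 + (1/n) * ?h y"
      using n by (intro convex_onD[OF cv]) auto
    moreover have "(1/n) *\<^sub>R y \<in> sphere 0 1" using n by (simp add: n_def)
    ultimately have "?h u0 \<le> (1 - 1/n) * G 0 + (1/n) * ?h y" using u0 by fastforce
    then have "n * ?h u0 \<le> n * ((1 - 1/n) * G 0 + (1/n) * ?h y)" using n by simp
    then show ?thesis using n by (simp add: n_def algebra_simps)
  qed
  then show ?thesis by (rule that)
qed

lemma strongly_convex_attains_min:
  fixes G :: "'y::euclidean_space \<Rightarrow> real"
  assumes cont: "continuous_on UNIV G"
    and cv: "convex_on UNIV (\<lambda>y. G y - mu / 2 * (norm y)\<^sup>2)"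
    and mu: "0 < mu"
  shows "\<exists>y0. \<forall>y. G y0 \<le> G y"
proof -
  obtain m where ray: "\<And>y. 1 \<le> norm y \<Longrightarrow> G 0 + norm y * (m - G 0) + mu / 2 * (norm y)\<^sup>2 \<le> G y"
    using strongly_convex_ray_bound[OF cont cv] by blast
  define R where "R = max 1 (2 * \<bar>m - G 0\<bar> / mu)"
  have far: "G 0 \<le> G y" if y: "R \<le> norm y" for y
  proof -
    have "\<bar>m - G 0\<bar> \<le> mu / 2 * norm y" using y mu by (simp add: R_def field_simps)
    then have "norm y * \<bar>m - G 0\<bar> \<le> norm y * (mu / 2 * norm y)" by (rule mult_left_mono) simp
    then have "norm y * \<bar>m - G 0\<bar> \<le> mu / 2 * (norm y)\<^sup>2" by (simp add: power2_eq_square mult_ac)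
    moreover have "- (norm y * \<bar>m - G 0\<bar>) \<le> norm y * (m - G 0)"
      using mult_left_mono[of "- \<bar>m - G 0\<bar>" "m - G 0" "norm y"] by simp
    ultimately have "0 \<le> norm y * (m - G 0) + mu / 2 * (norm y)\<^sup>2" by linarith
    then show ?thesis using ray[of y] y by (simp add: R_def)
  qed
  have "cball (0::'y) R \<noteq> {}" by (simp add: R_def)
  then obtain y0 where y0: "\<forall>y\<in>cball 0 R. G y0 \<le> G y"
    using continuous_attains_inf[OF compact_cball _ continuous_on_subset[OF cont]] by blast
  have "G y0 \<le> G 0" using y0 by (simp add: R_def)
  then have "G y0 \<le> G y" for y
    using y0 far[of y] by (cases "norm y \<le> R") auto
  then show ?thesis by blast
qed

(* Quadratic growth makes the minimiser unique, so the THE in ystar is not a junk value. *)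
lemma ystar_quadratic_growth:
  fixes g :: "'x \<Rightarrow> 'y::euclidean_space \<Rightarrow> real"
  assumes cont: "continuous_on UNIV (g x)"
    and cv: "convex_on UNIV (\<lambda>y. g x y - mug / 2 * (norm y)\<^sup>2)" and mug: "0 < mug"
  shows "g x (ystar g x) + mug / 4 * (norm (y - ystar g x))\<^sup>2 \<le> g x y"
proof -
  obtain y0 where y0: "\<forall>y. g x y0 \<le> g x y"
    using strongly_convex_attains_min[OF cont cv mug] by blast
  have growth: "g x y0 + mug / 4 * (norm (y - y0))\<^sup>2 \<le> g x y" for y
    by (rule strongly_convex_quadratic_growth[OF cv y0])
  have "ystar g x = y0"
    unfolding ystar_def
  proof (rule the_equality)
    fix y assume "\<forall>y'. g x y \<le> g x y'"
    then have "mug / 4 * (norm (y - y0))\<^sup>2 \<le> 0" using growth[of y] by (smt (verit) y0)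
    then show "y = y0" using mug by (simp add: mult_le_0_iff)
  qed (rule y0)
  then show ?thesis using growth by simp
qed

lemma lipschitz_constant_nonneg:
  fixes f :: "'x::real_normed_vector \<Rightarrow> 'y::euclidean_space \<Rightarrow> 'z::real_normed_vector"
  assumes "\<And>x y x' y'. norm (f x y - f x' y') \<le> L * norm ((x, y) - (x', y'))"
  shows "0 \<le> L"
proof -
  obtain e :: 'y where "e \<in> Basis" using nonempty_Basis by blast
  then have "norm e = 1" by (simp add: norm_Basis)
  moreover have "0 \<le> L * norm ((0::'x, 0::'y) - (0, e))"
    using assms[of 0 0 0 e] norm_ge_zero order_trans by blast
  ultimately show ?thesis by (simp add: norm_Pair)
qed

lemma partial_gradient_cross_difference_le:
  fixes g :: "'x::euclidean_space \<Rightarrow> 'y::euclidean_space \<Rightarrow> real"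
  assumes g_diff: "\<And>x y. ((\<lambda>p. g (fst p) (snd p)) has_derivative
                      (\<lambda>h. inner (gx x y) (fst h) + inner (gy x y) (snd h))) (at (x, y))"
    and A2_gx: "\<And>x y x' y'. norm (gx x y - gx x' y') \<le> Lgx * norm ((x, y) - (x', y'))"
  shows "\<bar>(g x y' - g x y) - (g x' y' - g x' y)\<bar> \<le> Lgx * norm (y' - y) * norm (x - x')"
proof -
  have gdx: "((\<lambda>x'. g x' y) has_derivative (\<lambda>h. inner (gx z y) h)) (at z)" for z y
    using has_derivative_partial_fst[OF g_diff] by simp
  have "((\<lambda>z. g z y' - g z y) has_derivative (\<lambda>h. inner (gx z y' - gx z y) h)) (at z within UNIV)" for z
    using has_derivative_diff[OF gdx gdx] by (simp add: inner_diff_left)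
  moreover have "onorm (\<lambda>h. inner (gx z y' - gx z y) h) \<le> Lgx * norm (y' - y)" for z
  proof (rule onorm_le)
    fix h
    have "norm (inner (gx z y' - gx z y) h) \<le> norm (gx z y' - gx z y) * norm h"
      by (simp add: Cauchy_Schwarz_ineq2)
    also have "\<dots> \<le> Lgx * norm (y' - y) * norm h"
      using A2_gx[of z y' z y] by (intro mult_right_mono) (auto simp: norm_Pair)
    finally show "norm (inner (gx z y' - gx z y) h) \<le> Lgx * norm (y' - y) * norm h" .
  qed
  ultimately have "norm ((g x y' - g x y) - (g x' y' - g x' y)) \<le> Lgx * norm (y' - y) * norm (x - x')"
    by (intro differentiable_bound[OF convex_UNIV]) auto
  then show ?thesis by simp
qed

(* Adding the quadratic growth of g x and g x' at each other's minimisers bounds the cross difference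
   from below by mug/2 |y' - y|^2. *)
lemma ystar_lipschitz:
  fixes g :: "'x::euclidean_space \<Rightarrow> 'y::euclidean_space \<Rightarrow> real"
  assumes g_diff: "\<And>x y. ((\<lambda>p. g (fst p) (snd p)) has_derivative
                      (\<lambda>h. inner (gx x y) (fst h) + inner (gy x y) (snd h))) (at (x, y))"
    and A2_gx: "\<And>x y x' y'. norm (gx x y - gx x' y') \<le> Lgx * norm ((x, y) - (x', y'))"
    and mug: "0 < mug"
    and A3: "\<And>x. convex_on UNIV (\<lambda>y. g x y - mug / 2 * (norm y)\<^sup>2)"
  shows "norm (ystar g x - ystar g x') \<le> 2 * Lgx / mug * norm (x - x')"
proof -
  have "(g z has_derivative (\<lambda>h. inner (gy z y) h)) (at y)" for z y
    using has_derivative_partial_snd[OF g_diff] by simp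
  then have cont: "continuous_on UNIV (g z)" for z
    by (intro continuous_at_imp_continuous_on) (auto intro: has_derivative_continuous)
  define y where "y = ystar g x"
  define y' where "y' = ystar g x'"
  define d where "d = norm (y' - y)"
  have "g x y + mug / 4 * d\<^sup>2 \<le> g x y'"
    using ystar_quadratic_growth[where g=g, OF cont A3 mug, of x y'] unfolding y_def y'_def d_def .
  moreover have "g x' y' + mug / 4 * d\<^sup>2 \<le> g x' y"
    using ystar_quadratic_growth[where g=g, OF cont A3 mug, of x' y] unfolding y_def y'_def d_def
    by (simp add: norm_minus_commute)
  moreover have "\<bar>(g x y' - g x y) - (g x' y' - g x' y)\<bar> \<le> Lgx * d * norm (x - x')"
    unfolding d_def by (rule partial_gradient_cross_difference_le[OF g_diff A2_gx])
  ultimately have key: "mug / 2 * d * d \<le> Lgx * norm (x - x') * d"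
    by (simp add: power2_eq_square mult_ac)
  have "d \<le> 2 * Lgx / mug * norm (x - x')"
  proof (cases "d = 0")
    case True
    then show ?thesis using lipschitz_constant_nonneg[OF A2_gx] mug by simp
  next
    case False
    then have "mug / 2 * d \<le> Lgx * norm (x - x')" using key by (simp add: d_def)
    then show ?thesis using mug by (simp add: field_simps)
  qed
  then show ?thesis by (simp add: d_def y_def y'_def norm_minus_commute)
qed

lemma eps_st_le_eps_j:
  assumes "s \<in> {1..j}" "t \<in> {1..j}"
  shows "eps_st g Lgx mug xs ys s t \<le> eps_j g Lgx mug xs ys j"
  unfolding eps_j_def
proof (rule Max_ge)
  show "finite {eps_st g Lgx mug xs ys s t | s t. s \<in> {1..j} \<and> t \<in> {1..j}}"
    by (rule finite_image_set2) auto
qed (use assms in blast)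

lemma eps_j_nonneg:
  assumes "0 \<le> Lgx" "0 < mug" "1 \<le> j"
  shows "0 \<le> eps_j g Lgx mug xs ys j"
  using order_trans[OF _ eps_st_le_eps_j[of 1 j 1 g Lgx mug xs ys]] assms by (simp add: eps_st_def)

lemma hessian_variation_le_eps_j:
  fixes g :: "'x::euclidean_space \<Rightarrow> 'y::euclidean_space \<Rightarrow> real"
  assumes g_diff: "\<And>x y. ((\<lambda>p. g (fst p) (snd p)) has_derivative
                      (\<lambda>h. inner (gx x y) (fst h) + inner (gy x y) (snd h))) (at (x, y))"
    and A2_gx: "\<And>x y x' y'. norm (gx x y - gx x' y') \<le> Lgx * norm ((x, y) - (x', y'))"
    and A2_gyy: "\<And>x y x' y'. norm (Dyy x y - Dyy x' y') \<le> Lgyy * norm ((x, y) - (x', y'))"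
    and mug: "0 < mug"
    and A3: "\<And>x. convex_on UNIV (\<lambda>y. g x y - mug / 2 * (norm y)\<^sup>2)"
    and st: "s \<in> {1..j}" "t \<in> {1..j}"
  shows "norm (Dyy (xs s) (ys s) - Dyy (xs t) (ys t)) \<le> 2 * Lgyy * eps_j g Lgx mug xs ys j"
proof -
  let ?y = "ystar g"
  have "norm (?y (xs s) - ys t) \<le> norm (?y (xs s) - ?y (xs t)) + norm (ys t - ?y (xs t))"
    by (rule norm_diff_triangle_le[of _ "?y (xs t)"]) (simp_all add: norm_minus_commute)
  then have "norm (ys s - ys t) \<le> norm (ys s - ?y (xs s)) + norm (?y (xs s) - ?y (xs t)) + norm (ys t - ?y (xs t))"
    using norm_diff_triangle_le[OF order.refl] by (smt (verit))
  also have "\<dots> \<le> norm (ys s - ?y (xs s)) + 2 * Lgx / mug * norm (xs s - xs t) + norm (ys t - ?y (xs t))"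
    using ystar_lipschitz[OF g_diff A2_gx mug A3] by simp
  finally have "norm ((xs s, ys s) - (xs t, ys t)) \<le>
      norm (xs s - xs t) + norm (ys s - ?y (xs s)) + 2 * Lgx / mug * norm (xs s - xs t) + norm (ys t - ?y (xs t))"
    using norm_Pair_le[of "xs s - xs t" "ys s - ys t"] by simp
  also have "\<dots> \<le> eps_st g Lgx mug xs ys s t + eps_st g Lgx mug xs ys t s"
    using lipschitz_constant_nonneg[OF A2_gx] mug
    by (simp add: eps_st_def norm_minus_commute[of "xs t"] field_simps)
  also have "\<dots> \<le> 2 * eps_j g Lgx mug xs ys j"
    using eps_st_le_eps_j[OF st, of g Lgx mug xs ys] eps_st_le_eps_j[OF st(2,1), of g Lgx mug xs ys]
    by simp
  finally have "Lgyy * norm ((xs s, ys s) - (xs t, ys t)) \<le> Lgyy * (2 * eps_j g Lgx mug xs ys j)"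
    by (rule mult_left_mono) (rule lipschitz_constant_nonneg[OF A2_gyy])
  then show ?thesis using A2_gyy[of "xs s" "ys s" "xs t" "ys t"] by simp
qed

section \<open>The Lanczos recurrence\<close>

lemma lanczos_Suc:
  "lanczos A b (Suc k) = (lz_q A b k, lz_q A b (Suc k), lz_beta A b (Suc k))"
  by (cases k) (simp_all add: lz_q_def lz_beta_def Let_def split: prod.split)

lemma lz_beta_1: "lz_beta A b (Suc 0) = 0"
  by (simp add: lz_beta_def)

lemma lz_alpha_Suc: "lz_alpha A b (Suc k) =
   inner (lz_q A b (Suc k)) (A (Suc k) (lz_q A b (Suc k)) - lz_beta A b (Suc k) *\<^sub>R lz_q A b k)"
  by (simp add: lz_alpha_def lanczos_Suc)

definition lz_omega :: "(nat \<Rightarrow> 'a::real_inner \<Rightarrow> 'a) \<Rightarrow> 'a \<Rightarrow> nat \<Rightarrow> 'a" where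
  "lz_omega A b k = A k (lz_q A b k) - lz_beta A b k *\<^sub>R lz_q A b (k - 1) - lz_alpha A b k *\<^sub>R lz_q A b k"

lemma lz_step:
  "lz_q A b (Suc (Suc k)) = lz_omega A b (Suc k) /\<^sub>R norm (lz_omega A b (Suc k))"
  "lz_beta A b (Suc (Suc k)) = norm (lz_omega A b (Suc k))"
proof -
  have "lanczos A b (Suc (Suc k)) = (lz_q A b (Suc k),
      lz_omega A b (Suc k) /\<^sub>R norm (lz_omega A b (Suc k)), norm (lz_omega A b (Suc k)))"
    by (simp only: lanczos.simps(3) lanczos_Suc[of A b k] prod.case Let_def lz_alpha_Suc
        lz_omega_def diff_Suc_1)
  then show "lz_q A b (Suc (Suc k)) = lz_omega A b (Suc k) /\<^sub>R norm (lz_omega A b (Suc k))"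
    "lz_beta A b (Suc (Suc k)) = norm (lz_omega A b (Suc k))"
    by (simp_all add: lz_q_def lz_beta_def)
qed

lemma lz_three_term_recurrence:
  assumes "1 \<le> k"
  shows "A k (lz_q A b k) = lz_beta A b k *\<^sub>R lz_q A b (k - 1) + lz_alpha A b k *\<^sub>R lz_q A b k
           + lz_beta A b (Suc k) *\<^sub>R lz_q A b (Suc k)"
proof -
  obtain k' where k: "k = Suc k'" using assms by (cases k) auto
  have "lz_beta A b (Suc k) *\<^sub>R lz_q A b (Suc k) = lz_omega A b k"
    unfolding k lz_step by (cases "lz_omega A b (Suc k') = 0") auto
  then show ?thesis by (simp add: lz_omega_def algebra_simps)
qed

lemma lz_q_unit:
  assumes b: "b \<noteq> 0" and beta_nz: "\<And>k. 1 \<le> k \<Longrightarrow> k < m \<Longrightarrow> lz_beta A b (Suc k) \<noteq> 0"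
    and k: "1 \<le> k" "k \<le> m"
  shows "norm (lz_q A b k) = 1"
proof (cases "k = 1")
  case True
  then show ?thesis using b by (simp add: lz_q_def)
next
  case False
  then obtain k' where k': "k = Suc (Suc k')" using k by (cases k; cases "k - 1") auto
  then have "lz_omega A b (Suc k') \<noteq> 0"
    using beta_nz[of "Suc k'"] k by (auto simp: lz_step)
  then show ?thesis unfolding k' lz_step by simp
qed

lemma lz_q_orthogonal_next:
  assumes "1 \<le> k" and "norm (lz_q A b k) = 1"
  shows "inner (lz_q A b k) (lz_q A b (Suc k)) = 0"
proof -
  obtain k' where k: "k = Suc k'" using assms by (cases k) auto
  have "inner (lz_q A b k) (lz_q A b k) = 1"
    using assms(2) by (simp add: power2_norm_eq_inner[symmetric])
  then have "inner (lz_q A b k) (lz_omega A b k) = lz_alpha A b k - lz_alpha A b k * 1"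
    unfolding lz_omega_def k lz_alpha_Suc diff_Suc_1
    by (simp only: inner_diff_right[of _ "_ - _" "_ *\<^sub>R _"] inner_scaleR_right)
  then have "inner (lz_q A b k) (lz_omega A b k) = 0" by simp
  then show ?thesis unfolding k lz_step by simp
qed

section \<open>Tridiagonal matrices and Gram matrices\<close>

text \<open>Matrices are functions on indices starting at 1; only the leading n \<times> n blocks are used.\<close>

definition tridiag :: "(nat \<Rightarrow> real) \<Rightarrow> (nat \<Rightarrow> real) \<Rightarrow> nat \<Rightarrow> nat \<Rightarrow> real" where
  "tridiag al be k l =
     (if k = l then al k else if k = Suc l \<or> l = Suc k then be (max k l) else 0)"

definition strict_upper :: "(nat \<Rightarrow> nat \<Rightarrow> real) \<Rightarrow> nat \<Rightarrow> nat \<Rightarrow> real" where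
  "strict_upper G k l = (if k < l then G k l else 0)"

(* Entry (k, l) of G T for the infinite tridiagonal T; for the Gram matrix of Lanczos vectors it is
   <q_k, A_l q_l> by the three-term recurrence. *)
definition mult_tridiag ::
    "(nat \<Rightarrow> nat \<Rightarrow> real) \<Rightarrow> (nat \<Rightarrow> real) \<Rightarrow> (nat \<Rightarrow> real) \<Rightarrow> nat \<Rightarrow> nat \<Rightarrow> real" where
  "mult_tridiag G al be k l = be l * G k (l - 1) + al l * G k l + be (Suc l) * G k (Suc l)"

lemma tridiag_sym: "tridiag al be k l = tridiag al be l k"
  unfolding tridiag_def by (auto simp: max.commute)

lemma tridiag_row_sum:
  assumes be1: "be (Suc 0) = 0" and p: "1 \<le> p" "p \<le> n"
  shows "(\<Sum>l = 1..n. tridiag al be p l * v l) =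
    be p * v (p - 1) + al p * v p + (if Suc p \<le> n then be (Suc p) * v (Suc p) else 0)"
proof -
  have "(\<Sum>l = 1..n. tridiag al be p l * v l) =
      (\<Sum>l = 1..n. if l = p then al p * v p else 0)
    + (\<Sum>l = 1..n. if l = p - 1 then (if 2 \<le> p then be p * v (p - 1) else 0) else 0)
    + (\<Sum>l = 1..n. if l = Suc p then be (Suc p) * v (Suc p) else 0)"
    unfolding sum.distrib[symmetric] tridiag_def using p by (intro sum.cong refl) auto
  also have "\<dots> = al p * v p + (if 2 \<le> p then be p * v (p - 1) else 0)
     + (if Suc p \<le> n then be (Suc p) * v (Suc p) else 0)"
    using p by (simp only: sum.delta finite_atLeastAtMost) auto
  also have "(if 2 \<le> p then be p * v (p - 1) else 0) = be p * v (p - 1)"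
    using p be1 by (cases "p = 1") auto
  finally show ?thesis by simp
qed

lemma tridiag_row_sum_truncate:
  assumes "be (Suc 0) = 0" "1 \<le> k" "k \<le> n" "n < N"
  shows "(\<Sum>l = 1..N. tridiag al be k l * v l) =
    (\<Sum>l = 1..n. tridiag al be k l * v l) + (if k = n then be (Suc n) * v (Suc n) else 0)"
  using tridiag_row_sum[of be k N] tridiag_row_sum[of be k n] assms by auto

lemma symmetric_eigvec_inner:
  fixes T :: "nat \<Rightarrow> nat \<Rightarrow> real"
  assumes sym: "\<And>k l. T k l = T l k"
    and ev: "\<And>k. k \<in> {1..n} \<Longrightarrow> (\<Sum>l = 1..n. T k l * v l) = mu * v k"
  shows "(\<Sum>k = 1..n. v k * (\<Sum>l = 1..n. T k l * y l)) = mu * (\<Sum>k = 1..n. v k * y k)"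
proof -
  have "(\<Sum>k = 1..n. v k * (\<Sum>l = 1..n. T k l * y l)) = (\<Sum>k = 1..n. \<Sum>l = 1..n. v k * (T k l * y l))"
    by (simp add: sum_distrib_left)
  also have "\<dots> = (\<Sum>l = 1..n. \<Sum>k = 1..n. v k * (T k l * y l))"
    by (rule sum.swap)
  also have "\<dots> = (\<Sum>l = 1..n. y l * (\<Sum>k = 1..n. T l k * v k))"
    by (intro sum.cong refl) (simp add: sum_distrib_left sym mult_ac)
  also have "\<dots> = (\<Sum>l = 1..n. y l * (mu * v l))"
    using ev by (intro sum.cong refl) simp
  finally show ?thesis by (simp add: sum_distrib_left mult_ac)
qed

lemma tridiag_eigvec_component:
  assumes be1: "be (Suc 0) = 0" and n: "1 \<le> n" "n < N"
    and y: "\<And>k. k \<in> {1..N} \<Longrightarrow> (\<Sum>l = 1..N. tridiag al be k l * y l) = \<eta> * y k"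
    and v: "\<And>k. k \<in> {1..n} \<Longrightarrow> (\<Sum>l = 1..n. tridiag al be k l * v l) = \<theta> * v k"
  shows "(\<eta> - \<theta>) * (\<Sum>k = 1..n. v k * y k) = be (Suc n) * v n * y (Suc n)"
proof -
  have "\<eta> * (\<Sum>k = 1..n. v k * y k) = (\<Sum>k = 1..n. v k * (\<Sum>l = 1..N. tridiag al be k l * y l))"
    using y n by (simp add: sum_distrib_left mult_ac)
  also have "\<dots> = (\<Sum>k = 1..n. v k * (\<Sum>l = 1..n. tridiag al be k l * y l)
      + (if k = n then v n * (be (Suc n) * y (Suc n)) else 0))"
    using tridiag_row_sum_truncate[where be=be, OF be1 _ _ n(2)] by (intro sum.cong refl) (simp add: algebra_simps)
  also have "\<dots> = \<theta> * (\<Sum>k = 1..n. v k * y k) + v n * (be (Suc n) * y (Suc n))"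
    using n symmetric_eigvec_inner[OF tridiag_sym v] by (simp add: sum.distrib)
  finally show ?thesis by (simp add: algebra_simps)
qed

lemma commutator_strict_upper_tridiag:
  fixes G :: "nat \<Rightarrow> nat \<Rightarrow> real" and al be :: "nat \<Rightarrow> real"
  defines "T \<equiv> tridiag al be" and "R \<equiv> strict_upper G" and "C \<equiv> mult_tridiag G al be"
  assumes G_sym: "\<And>k l. G k l = G l k"
    and G_diag: "\<And>k. 1 \<le> k \<Longrightarrow> k \<le> n \<Longrightarrow> G k k = 1"
    and G_next: "\<And>k. 1 \<le> k \<Longrightarrow> k < n \<Longrightarrow> G k (Suc k) = 0"
    and be1: "be (Suc 0) = 0" and kl: "k \<in> {1..n}" "l \<in> {1..n}"
  shows "(\<Sum>p = 1..n. R k p * T p l) - (\<Sum>p = 1..n. T k p * R p l) =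
    (if k < l then C k l - C l k - (if l = n then be (Suc n) * G k (Suc n) else 0) else 0)"
proof -
  have RT: "(\<Sum>p = 1..n. R k p * T p l) =
      be l * R k (l - 1) + al l * R k l + (if Suc l \<le> n then be (Suc l) * R k (Suc l) else 0)"
    using tridiag_row_sum[where be=be and p=l and n=n and al=al and v="R k", OF be1] kl by (simp add: T_def tridiag_sym mult.commute)
  have TR: "(\<Sum>p = 1..n. T k p * R p l) =
      be k * R (k - 1) l + al k * R k l + (if Suc k \<le> n then be (Suc k) * R (Suc k) l else 0)"
    using tridiag_row_sum[where be=be and p=k and n=n and al=al and v="\<lambda>p. R p l", OF be1] kl by (simp add: T_def)
  show ?thesis
  proof (cases "k < l")
    case True
    then show ?thesis
      unfolding RT TR using kl G_diag[of k] G_diag[of l] be1 G_sym[of l "k - 1"]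
        G_sym[of l k] G_sym[of l "Suc k"]
      by (cases "l = Suc k"; cases "l = n") (auto simp: R_def C_def strict_upper_def mult_tridiag_def Suc_le_eq)
  next
    case False
    then show ?thesis
      unfolding RT TR using kl G_next[of l] G_next[of "l - 1"] be1
      by (cases "k = l"; cases "l = 1") (auto simp: R_def strict_upper_def Suc_le_eq)
  qed
qed

lemma sum_bilinear_matrix_product:
  fixes v w :: "nat \<Rightarrow> real" and X Y :: "nat \<Rightarrow> nat \<Rightarrow> real"
  shows
  "(\<Sum>k\<in>K. \<Sum>l\<in>L. v k * w l * (\<Sum>p\<in>P. X k p * Y p l)) =
   (\<Sum>k\<in>K. v k * (\<Sum>p\<in>P. X k p * (\<Sum>l\<in>L. Y p l * w l)))"
proof -
  have "(\<Sum>k\<in>K. \<Sum>l\<in>L. v k * w l * (\<Sum>p\<in>P. X k p * Y p l)) =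
      (\<Sum>k\<in>K. \<Sum>l\<in>L. \<Sum>p\<in>P. v k * (X k p * (Y p l * w l)))"
    by (simp add: sum_distrib_left mult_ac)
  also have "\<dots> = (\<Sum>k\<in>K. \<Sum>p\<in>P. \<Sum>l\<in>L. v k * (X k p * (Y p l * w l)))"
    by (rule sum.cong[OF refl]) (rule sum.swap)
  finally show ?thesis by (simp add: sum_distrib_left)
qed

lemma eigvec_commutator_form_zero:
  fixes T R :: "nat \<Rightarrow> nat \<Rightarrow> real"
  assumes sym: "\<And>k l. T k l = T l k"
    and ev: "\<And>k. k \<in> {1..n} \<Longrightarrow> (\<Sum>l = 1..n. T k l * v l) = mu * v k"
  shows "(\<Sum>k = 1..n. \<Sum>l = 1..n.
           v k * v l * ((\<Sum>p = 1..n. R k p * T p l) - (\<Sum>p = 1..n. T k p * R p l))) = 0"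
proof -
  have RT: "(\<Sum>k = 1..n. \<Sum>l = 1..n. v k * v l * (\<Sum>p = 1..n. R k p * T p l)) =
      mu * (\<Sum>k = 1..n. v k * (\<Sum>p = 1..n. R k p * v p))"
  proof -
    have "(\<Sum>k = 1..n. \<Sum>l = 1..n. v k * v l * (\<Sum>p = 1..n. R k p * T p l)) =
        (\<Sum>k = 1..n. v k * (\<Sum>p = 1..n. R k p * (mu * v p)))"
      unfolding sum_bilinear_matrix_product using ev by (intro sum.cong refl) auto
    then show ?thesis by (simp add: sum_distrib_left mult_ac)
  qed
  have TR: "(\<Sum>k = 1..n. \<Sum>l = 1..n. v k * v l * (\<Sum>p = 1..n. T k p * R p l)) =
      mu * (\<Sum>k = 1..n. v k * (\<Sum>p = 1..n. R k p * v p))"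
    unfolding sum_bilinear_matrix_product by (rule symmetric_eigvec_inner[OF sym ev])
  show ?thesis
    using RT TR by (simp add: right_diff_distrib sum_subtractf)
qed

lemma tridiag_eigvec_gram_defect:
  fixes G :: "nat \<Rightarrow> nat \<Rightarrow> real" and al be v :: "nat \<Rightarrow> real"
  defines "C \<equiv> mult_tridiag G al be"
  assumes G_sym: "\<And>k l. G k l = G l k"
    and G_diag: "\<And>k. 1 \<le> k \<Longrightarrow> k \<le> n \<Longrightarrow> G k k = 1"
    and G_next: "\<And>k. 1 \<le> k \<Longrightarrow> k \<le> n \<Longrightarrow> G k (Suc k) = 0"
    and be1: "be (Suc 0) = 0"
    and ev: "\<And>k. k \<in> {1..n} \<Longrightarrow> (\<Sum>l = 1..n. tridiag al be k l * v l) = mu * v k"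
  shows "(\<Sum>k = 1..n. \<Sum>l = 1..n. if k < l then v k * v l * (C k l - C l k) else 0) =
    be (Suc n) * v n * (\<Sum>k = 1..n. v k * G k (Suc n))"
proof -
  let ?T = "tridiag al be" and ?R = "strict_upper G"
  have "(\<Sum>k = 1..n. \<Sum>l = 1..n. if k < l then v k * v l * (C k l - C l k) else 0) =
      (\<Sum>k = 1..n. \<Sum>l = 1..n.
         v k * v l * ((\<Sum>p = 1..n. ?R k p * ?T p l) - (\<Sum>p = 1..n. ?T k p * ?R p l))
         + (if l = n then (if k < n then v k * v n * (be (Suc n) * G k (Suc n)) else 0) else 0))"
    unfolding C_def
    using commutator_strict_upper_tridiag[where G=G and al=al and be=be and n=n, OF G_sym G_diag G_next be1]
    by (intro sum.cong refl) (auto simp: algebra_simps)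
  also have "\<dots> = (\<Sum>k = 1..n. if k < n then v k * v n * (be (Suc n) * G k (Suc n)) else 0)"
    using eigvec_commutator_form_zero[where R="?R", OF tridiag_sym ev]
    by (simp add: sum.distrib sum.delta')
  also have "\<dots> = (\<Sum>k = 1..n. v k * v n * (be (Suc n) * G k (Suc n)))"
    using G_next[of n] by (intro sum.cong refl) auto
  finally show ?thesis by (simp add: sum_distrib_left mult_ac)
qed

lemma strict_upper_quadratic_bound:
  fixes v :: "nat \<Rightarrow> real" and w :: "nat \<Rightarrow> nat \<Rightarrow> real"
  assumes unit: "(\<Sum>k = 1..n. (v k)\<^sup>2) = 1"
    and w: "\<And>k l. k \<in> {1..n} \<Longrightarrow> l \<in> {1..n} \<Longrightarrow> \<bar>w k l\<bar> \<le> \<omega>" and \<omega>: "0 \<le> \<omega>"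
  shows "\<bar>\<Sum>k = 1..n. \<Sum>l = 1..n. if k < l then v k * v l * w k l else 0\<bar> \<le> \<omega> * n / 2"
proof -
  let ?lo = "\<lambda>k l. if k < l then (v k)\<^sup>2 else 0" and ?hi = "\<lambda>k l. if k < l then (v l)\<^sup>2 else 0"
  have "\<bar>\<Sum>k = 1..n. \<Sum>l = 1..n. if k < l then v k * v l * w k l else 0\<bar>
      \<le> (\<Sum>k = 1..n. \<Sum>l = 1..n. \<bar>if k < l then v k * v l * w k l else 0\<bar>)"
    by (rule order_trans[OF sum_abs sum_mono[OF sum_abs]])
  also have "\<dots> \<le> (\<Sum>k = 1..n. \<Sum>l = 1..n. \<omega> / 2 * (?lo k l + ?hi k l))"
  proof (intro sum_mono)
    fix k l assume kl: "k \<in> {1..n}" "l \<in> {1..n}"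
    have "\<bar>v k * v l\<bar> \<le> ((v k)\<^sup>2 + (v l)\<^sup>2) / 2"
      using sum_squares_bound[of "\<bar>v k\<bar>" "\<bar>v l\<bar>"] by (simp add: abs_mult)
    then have "\<bar>v k * v l * w k l\<bar> \<le> ((v k)\<^sup>2 + (v l)\<^sup>2) / 2 * \<omega>"
      unfolding abs_mult[of "v k * v l"] using w[OF kl] by (intro mult_mono) auto
    then show "\<bar>if k < l then v k * v l * w k l else 0\<bar> \<le> \<omega> / 2 * (?lo k l + ?hi k l)"
      using \<omega> by (auto simp: algebra_simps)
  qed
  also have "\<dots> = \<omega> / 2 * ((\<Sum>k = 1..n. \<Sum>l = 1..n. ?lo k l) + (\<Sum>k = 1..n. \<Sum>l = 1..n. ?hi k l))"
    by (simp only: sum.distrib distrib_left sum_distrib_left)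
  also have "(\<Sum>k = 1..n. \<Sum>l = 1..n. ?hi k l) = (\<Sum>k = 1..n. \<Sum>l = 1..n. if l < k then (v k)\<^sup>2 else 0)"
    by (rule sum.swap)
  also have "(\<Sum>k = 1..n. \<Sum>l = 1..n. ?lo k l) + \<dots> \<le> (\<Sum>k = 1..n. \<Sum>l = 1..n. (v k)\<^sup>2)"
    unfolding sum.distrib[symmetric] by (intro sum_mono) auto
  also have "\<dots> = n" using unit by (simp add: sum_distrib_left[symmetric])
  finally show ?thesis using \<omega> by (simp add: mult_left_mono)
qed

lemma sum_atLeast1_atMost_shift: "(\<Sum>k = 1..n. f k) = (\<Sum>i<n. f (Suc i))"
  by (simp add: sum.atLeast1_atMost_eq lessThan_atLeast0)

lemma orthonormal_rows_imp_orthonormal_columns: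
  fixes Y :: "nat \<Rightarrow> nat \<Rightarrow> real"
  assumes orth: "\<And>r r'. r \<in> {1..n} \<Longrightarrow> r' \<in> {1..n} \<Longrightarrow>
     (\<Sum>k = 1..n. Y r k * Y r' k) = (if r = r' then 1 else 0)"
    and k: "k \<in> {1..n}" "k' \<in> {1..n}"
  shows "(\<Sum>r = 1..n. Y r k * Y r k') = (if k = k' then 1 else 0)"
proof -
  define M where "M = mat n n (\<lambda>(r, c). Y (Suc r) (Suc c))"
  have M: "M \<in> carrier_mat n n" "transpose_mat M \<in> carrier_mat n n" unfolding M_def by auto
  have "M * transpose_mat M = 1\<^sub>m n"
  proof (rule eq_matI)
    fix a c assume ac: "a < dim_row (1\<^sub>m n)" "c < dim_col (1\<^sub>m n)"
    then have "(M * transpose_mat M) $$ (a, c) = (\<Sum>i = 1..n. Y (Suc a) i * Y (Suc c) i)"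
      unfolding M_def sum_atLeast1_atMost_shift by (simp add: scalar_prod_def lessThan_atLeast0)
    also have "\<dots> = (if a = c then 1 else 0)" using orth[of "Suc a" "Suc c"] ac by simp
    finally show "(M * transpose_mat M) $$ (a, c) = 1\<^sub>m n $$ (a, c)" using ac by simp
  qed (simp_all add: M_def)
  then have MT: "transpose_mat M * M = 1\<^sub>m n" using mat_mult_left_right_inverse[OF M] by simp
  obtain a c where ac: "k = Suc a" "a < n" "k' = Suc c" "c < n"
    using k by (cases k; cases k') auto
  have "(transpose_mat M * M) $$ (a, c) = (\<Sum>r = 1..n. Y r k * Y r k')"
    using ac unfolding M_def sum_atLeast1_atMost_shift by (simp add: scalar_prod_def lessThan_atLeast0)
  then show ?thesis using MT ac by simp
qed

lemma orthonormal_rows_parseval: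
  fixes Y :: "nat \<Rightarrow> nat \<Rightarrow> real" and y z :: "nat \<Rightarrow> real"
  assumes orth: "\<And>r r'. r \<in> {1..n} \<Longrightarrow> r' \<in> {1..n} \<Longrightarrow>
     (\<Sum>k = 1..n. Y r k * Y r' k) = (if r = r' then 1 else 0)"
  shows "(\<Sum>k = 1..n. y k * z k) =
    (\<Sum>r = 1..n. (\<Sum>k = 1..n. Y r k * y k) * (\<Sum>k = 1..n. Y r k * z k))"
proof -
  have "(\<Sum>r = 1..n. (\<Sum>k = 1..n. Y r k * y k) * (\<Sum>k = 1..n. Y r k * z k))
      = (\<Sum>r = 1..n. \<Sum>k = 1..n. \<Sum>k' = 1..n. y k * z k' * (Y r k * Y r k'))"
    by (simp add: sum_product mult_ac)
  also have "\<dots> = (\<Sum>k = 1..n. \<Sum>r = 1..n. \<Sum>k' = 1..n. y k * z k' * (Y r k * Y r k'))"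
    by (rule sum.swap)
  also have "\<dots> = (\<Sum>k = 1..n. \<Sum>k' = 1..n. \<Sum>r = 1..n. y k * z k' * (Y r k * Y r k'))"
    by (rule sum.cong[OF refl]) (rule sum.swap)
  also have "\<dots> = (\<Sum>k = 1..n. \<Sum>k' = 1..n. y k * z k' * (\<Sum>r = 1..n. Y r k * Y r k'))"
    by (simp add: sum_distrib_left)
  also have "\<dots> = (\<Sum>k = 1..n. \<Sum>k' = 1..n. if k = k' then y k * z k' else 0)"
    using orthonormal_rows_imp_orthonormal_columns[OF orth] by (intro sum.cong refl) auto
  finally show ?thesis by simp
qed

lemma strict_upper_form_by_columns:
  fixes y :: "nat \<Rightarrow> real" and G :: "nat \<Rightarrow> nat \<Rightarrow> real"
  shows "(\<Sum>k = 1..j. \<Sum>l = 1..j. y k * strict_upper G k l * y l) =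
    (\<Sum>n = 1..j - 1. y (Suc n) * (\<Sum>k = 1..n. y k * G k (Suc n)))"
proof (cases "j = 0")
  case False
  define h where "h l = y l * (\<Sum>k = 1..l - 1. y k * G k l)" for l
  have "(\<Sum>k = 1..j. \<Sum>l = 1..j. y k * strict_upper G k l * y l) = (\<Sum>l = 1..j. h l)"
  proof (subst sum.swap, intro sum.cong refl)
    fix l assume "l \<in> {1..j}"
    then have lower: "{1..j} \<inter> {k. k < l} = {1..l - 1}" by auto
    have "(\<Sum>k = 1..j. y k * strict_upper G k l * y l) =
        (\<Sum>k = 1..j. if k < l then y l * (y k * G k l) else 0)"
      by (intro sum.cong refl) (simp add: strict_upper_def)
    also have "\<dots> = (\<Sum>k \<in> {1..j} \<inter> {k. k < l}. y l * (y k * G k l))"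
      by (simp add: sum.inter_restrict)
    finally show "(\<Sum>k = 1..j. y k * strict_upper G k l * y l) = h l"
      unfolding lower h_def by (simp add: sum_distrib_left)
  qed
  also have "\<dots> = (\<Sum>n = 1..j - 1. h (Suc n))"
  proof -
    obtain j' where j: "j = Suc j'" using False by (cases j) auto
    have "(\<Sum>l = 1..Suc j'. h l) = h 1 + (\<Sum>l = Suc 1..Suc j'. h l)"
      by (rule sum.atLeast_Suc_atMost) simp
    also have "\<dots> = (\<Sum>n = 1..j'. h (Suc n))"
      by (simp only: sum.shift_bounds_cl_Suc_ivl) (simp add: h_def)
    finally show ?thesis using j by simp
  qed
  finally show ?thesis by (simp only: h_def diff_Suc_1)
qed simp

lemma weighted_ratio_sum_bound:
  fixes w :: "nat \<Rightarrow> real" and S d :: "nat \<Rightarrow> nat \<Rightarrow> real"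
  assumes w_nonneg: "\<And>n. 0 \<le> w n" and w_sum: "(\<Sum>n = 1..N. w n) \<le> 1"
    and S: "\<And>n s. 1 \<le> s \<Longrightarrow> s \<le> n \<Longrightarrow> n \<le> N \<Longrightarrow> \<bar>S n s\<bar> \<le> \<omega> * n / 2"
    and d: "\<And>n s. 1 \<le> s \<Longrightarrow> s \<le> n \<Longrightarrow> n \<le> N \<Longrightarrow> \<delta> \<le> \<bar>d n s\<bar>"
    and \<delta>: "0 < \<delta>" and \<omega>: "0 \<le> \<omega>"
  shows "\<delta> * \<bar>\<Sum>n = 1..N. \<Sum>s = 1..n. w n * S n s / d n s\<bar> \<le> \<omega> * (real N)\<^sup>2 / 2"
proof -
  let ?K = "\<omega> * (real N)\<^sup>2 / (2 * \<delta>)"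
  have row: "\<bar>\<Sum>s = 1..n. w n * S n s / d n s\<bar> \<le> w n * ?K" if n: "n \<in> {1..N}" for n
  proof -
    have "\<bar>\<Sum>s = 1..n. w n * S n s / d n s\<bar> \<le> (\<Sum>s = 1..n. w n * (\<omega> * n / 2 / \<delta>))"
    proof (rule order_trans[OF sum_abs sum_mono])
      fix s assume s: "s \<in> {1..n}"
      have "\<bar>S n s\<bar> / \<bar>d n s\<bar> \<le> \<omega> * n / 2 / \<delta>"
        using S[of s n] d[of s n] s n \<delta> by (intro frac_le) auto
      then have "w n * (\<bar>S n s\<bar> / \<bar>d n s\<bar>) \<le> w n * (\<omega> * n / 2 / \<delta>)"
        using w_nonneg by (rule mult_left_mono)
      then show "\<bar>w n * S n s / d n s\<bar> \<le> w n * (\<omega> * n / 2 / \<delta>)"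
        using w_nonneg[of n] by (simp add: abs_mult)
    qed
    also have "\<dots> = w n * (\<omega> * (real n)\<^sup>2 / (2 * \<delta>))" by (simp add: power2_eq_square)
    also have "\<dots> \<le> w n * ?K"
      using n \<omega> \<delta> w_nonneg[of n]
      by (intro mult_left_mono divide_right_mono mult_left_mono power_mono) auto
    finally show ?thesis .
  qed
  have "\<bar>\<Sum>n = 1..N. \<Sum>s = 1..n. w n * S n s / d n s\<bar> \<le> (\<Sum>n = 1..N. w n * ?K)"
    by (rule order_trans[OF sum_abs sum_mono[OF row]])
  also have "\<dots> = (\<Sum>n = 1..N. w n) * ?K"
    by (rule sum_distrib_right[symmetric])
  also have "\<dots> \<le> ?K"
    using w_sum w_nonneg \<omega> \<delta> by (intro mult_left_le_one_le sum_nonneg) auto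
  finally show ?thesis using \<delta> by (simp add: field_simps)
qed

section \<open>Ritz value gaps\<close>

(* G is the Gram matrix of the Lanczos vectors, Y n r the r-th eigenvector of T_n with value mu n r. *)
locale tridiag_gram =
  fixes G :: "nat \<Rightarrow> nat \<Rightarrow> real" and al be :: "nat \<Rightarrow> real" and j :: nat
    and mu :: "nat \<Rightarrow> nat \<Rightarrow> real" and Y :: "nat \<Rightarrow> nat \<Rightarrow> nat \<Rightarrow> real"
  assumes G_sym: "\<And>k l. G k l = G l k"
    and G_diag: "\<And>k. 1 \<le> k \<Longrightarrow> k \<le> j \<Longrightarrow> G k k = 1"
    and G_next: "\<And>k. 1 \<le> k \<Longrightarrow> k < j \<Longrightarrow> G k (Suc k) = 0"
    and be1: "be (Suc 0) = 0"
    and eig: "\<And>n r k. 1 \<le> n \<Longrightarrow> n \<le> j \<Longrightarrow> r \<in> {1..n} \<Longrightarrow> k \<in> {1..n} \<Longrightarrow>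
              (\<Sum>l = 1..n. tridiag al be k l * Y n r l) = mu n r * Y n r k"
    and orth: "\<And>n r r'. 1 \<le> n \<Longrightarrow> n \<le> j \<Longrightarrow> r \<in> {1..n} \<Longrightarrow> r' \<in> {1..n} \<Longrightarrow>
              (\<Sum>k = 1..n. Y n r k * Y n r' k) = (if r = r' then 1 else 0)"
begin

(* Vanishes when all A_k coincide, since C is then symmetric. *)
definition ritz_defect :: "nat \<Rightarrow> nat \<Rightarrow> real" where
  "ritz_defect n s = (\<Sum>k = 1..n. \<Sum>l = 1..n. if k < l
     then Y n s k * Y n s l * (mult_tridiag G al be k l - mult_tridiag G al be l k) else 0)"

lemma ritz_defect_eq:
  assumes "1 \<le> n" "n < j" "s \<in> {1..n}"
  shows "ritz_defect n s = be (Suc n) * Y n s n * (\<Sum>k = 1..n. Y n s k * G k (Suc n))"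
  unfolding ritz_defect_def
  by (rule tridiag_eigvec_gram_defect[where mu="mu n s"])
    (use assms eig[of n s] in \<open>auto intro: G_sym G_diag G_next be1\<close>)

lemma ritz_defect_bound:
  assumes defect: "\<And>k l. k \<in> {1..j} \<Longrightarrow> l \<in> {1..j} \<Longrightarrow>
      \<bar>mult_tridiag G al be k l - mult_tridiag G al be l k\<bar> \<le> \<omega>"
    and \<omega>: "0 \<le> \<omega>" and ns: "1 \<le> s" "s \<le> n" "n \<le> j"
  shows "\<bar>ritz_defect n s\<bar> \<le> \<omega> * n / 2"
  unfolding ritz_defect_def
proof (rule strict_upper_quadratic_bound[OF _ _ \<omega>])
  show "(\<Sum>k = 1..n. (Y n s k)\<^sup>2) = 1"
    using orth[of n s s] ns by (simp add: power2_eq_square)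
qed (use defect ns in auto)

lemma strict_upper_form_expansion:
  assumes i: "i \<in> {1..j}" and gap: "\<And>n s. 1 \<le> s \<Longrightarrow> s \<le> n \<Longrightarrow> n < j \<Longrightarrow> mu j i \<noteq> mu n s"
  shows "(\<Sum>k = 1..j. \<Sum>l = 1..j. Y j i k * strict_upper G k l * Y j i l) =
    (\<Sum>n = 1..j - 1. \<Sum>s = 1..n. (Y j i (Suc n))\<^sup>2 * ritz_defect n s / (mu j i - mu n s))"
  unfolding strict_upper_form_by_columns
proof (intro sum.cong refl)
  fix n assume "n \<in> {1..j - 1}"
  then have n: "1 \<le> n" "n < j" by auto
  let ?y = "Y j i"
  have comp: "(\<Sum>k = 1..n. Y n s k * ?y k) = be (Suc n) * Y n s n * ?y (Suc n) / (mu j i - mu n s)"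
    if s: "s \<in> {1..n}" for s
  proof -
    have "(mu j i - mu n s) * (\<Sum>k = 1..n. Y n s k * ?y k) = be (Suc n) * Y n s n * ?y (Suc n)"
      using n s i by (intro tridiag_eigvec_component[where al=al and be=be, OF be1 n] eig) auto
    then show ?thesis using gap[of s n] s n by (simp add: field_simps)
  qed
  have "?y (Suc n) * (\<Sum>k = 1..n. ?y k * G k (Suc n)) =
      ?y (Suc n) * (\<Sum>s = 1..n. (\<Sum>k = 1..n. Y n s k * ?y k) * (\<Sum>k = 1..n. Y n s k * G k (Suc n)))"
    using orth[of n] n by (subst orthonormal_rows_parseval[where Y="Y n"]) auto
  also have "\<dots> = (\<Sum>s = 1..n. ?y (Suc n) *
      ((\<Sum>k = 1..n. Y n s k * ?y k) * (\<Sum>k = 1..n. Y n s k * G k (Suc n))))"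
    by (rule sum_distrib_left)
  also have "\<dots> = (\<Sum>s = 1..n. (?y (Suc n))\<^sup>2 * ritz_defect n s / (mu j i - mu n s))"
  proof (intro sum.cong refl)
    fix s assume s: "s \<in> {1..n}"
    show "?y (Suc n) * ((\<Sum>k = 1..n. Y n s k * ?y k) * (\<Sum>k = 1..n. Y n s k * G k (Suc n))) =
        (?y (Suc n))\<^sup>2 * ritz_defect n s / (mu j i - mu n s)"
      unfolding comp[OF s] ritz_defect_eq[OF n s] by (simp add: power2_eq_square mult_ac)
  qed
  finally show "?y (Suc n) * (\<Sum>k = 1..n. ?y k * G k (Suc n)) =
      (\<Sum>s = 1..n. (?y (Suc n))\<^sup>2 * ritz_defect n s / (mu j i - mu n s))" .
qed

lemma ritz_weights_sum_le_1:
  assumes i: "i \<in> {1..j}"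
  shows "(\<Sum>n = 1..j - 1. (Y j i (Suc n))\<^sup>2) \<le> 1"
proof -
  have "(\<Sum>n = 1..j - 1. (Y j i (Suc n))\<^sup>2) = (\<Sum>k \<in> Suc ` {1..j - 1}. (Y j i k)\<^sup>2)"
    by (subst sum.reindex) (simp_all add: o_def)
  also have "\<dots> \<le> (\<Sum>k = 1..j. (Y j i k)\<^sup>2)" by (intro sum_mono2) auto
  also have "\<dots> = 1" using orth[of j i i] i by (simp add: power2_eq_square)
  finally show ?thesis .
qed

theorem ritz_value_gap:
  assumes defect: "\<And>k l. k \<in> {1..j} \<Longrightarrow> l \<in> {1..j} \<Longrightarrow>
      \<bar>mult_tridiag G al be k l - mult_tridiag G al be l k\<bar> \<le> \<omega>"
    and j: "2 \<le> j" and i: "i \<in> {1..j}"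
  shows "\<exists>s n. 1 \<le> s \<and> s \<le> n \<and> n < j \<and>
    \<bar>mu j i - mu n s\<bar> * \<bar>\<Sum>k = 1..j. \<Sum>l = 1..j. Y j i k * strict_upper G k l * Y j i l\<bar>
      \<le> \<omega> * (real j)\<^sup>2 / 2"
proof -
  let ?yRy = "\<Sum>k = 1..j. \<Sum>l = 1..j. Y j i k * strict_upper G k l * Y j i l"
  \<comment> \<open>take the pair with the smallest gap; if that gap is positive, the expansion applies\<close>
  define P where "P = {(n, s). 1 \<le> s \<and> s \<le> n \<and> n < j}"
  have "P \<subseteq> {..j} \<times> {..j}" "(1, 1) \<in> P" using j by (auto simp: P_def)
  then obtain n0 s0 where p0: "(n0, s0) \<in> P"
    and least: "\<And>n s. (n, s) \<in> P \<Longrightarrow> \<bar>mu j i - mu n0 s0\<bar> \<le> \<bar>mu j i - mu n s\<bar>"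
    using ex_is_arg_min_if_finite[of P "\<lambda>(n, s). \<bar>mu j i - mu n s\<bar>"] finite_subset
    by (fastforce simp: is_arg_min_linorder)
  have \<omega>: "0 \<le> \<omega>" using defect[of 1 1] j by auto
  have "\<bar>mu j i - mu n0 s0\<bar> * \<bar>?yRy\<bar> \<le> \<omega> * (real j)\<^sup>2 / 2"
  proof (cases "mu j i = mu n0 s0")
    case False
    then have \<delta>: "0 < \<bar>mu j i - mu n0 s0\<bar>" by simp
    have gap_nz: "mu j i \<noteq> mu n s" if "1 \<le> s" "s \<le> n" "n < j" for n s
      using least[of n s] \<delta> that by (auto simp: P_def)
    have "\<bar>mu j i - mu n0 s0\<bar> * \<bar>?yRy\<bar> = \<bar>mu j i - mu n0 s0\<bar> * \<bar>\<Sum>n = 1..j - 1. \<Sum>s = 1..n.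
        (Y j i (Suc n))\<^sup>2 * ritz_defect n s / (mu j i - mu n s)\<bar>"
      by (simp only: strict_upper_form_expansion[OF i gap_nz])
    also have "\<dots> \<le> \<omega> * (real (j - 1))\<^sup>2 / 2"
    proof (rule weighted_ratio_sum_bound[OF _ ritz_weights_sum_le_1[OF i] _ _ \<delta> \<omega>])
      show "\<bar>ritz_defect n s\<bar> \<le> \<omega> * n / 2" if "1 \<le> s" "s \<le> n" "n \<le> j - 1" for n s
        using that by (intro ritz_defect_bound[OF defect \<omega>]) auto
    qed (use least in \<open>auto simp: P_def\<close>)
    also have "\<dots> \<le> \<omega> * (real j)\<^sup>2 / 2"
      using \<omega> by (intro mult_left_mono divide_right_mono power_mono) auto
    finally show ?thesis .
  qed (use \<omega> in simp)
  then show ?thesis using p0 by (auto simp: P_def)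
qed
end

lemma lz_T_eq_tridiag: "lz_T A b = tridiag (lz_alpha A b) (lz_beta A b)"
  by (simp add: fun_eq_iff lz_T_def tridiag_def)

lemma lz_R_eq_strict_upper: "lz_R A b = strict_upper (\<lambda>k l. inner (lz_q A b k) (lz_q A b l))"
  by (simp add: fun_eq_iff lz_R_def strict_upper_def)

lemma lz_inner_A_eq_mult_tridiag:
  assumes "1 \<le> l"
  shows "inner (lz_q A b k) (A l (lz_q A b l)) =
    mult_tridiag (\<lambda>k l. inner (lz_q A b k) (lz_q A b l)) (lz_alpha A b) (lz_beta A b) k l"
  by (simp add: lz_three_term_recurrence[OF assms] mult_tridiag_def inner_add_right)

lemma lz_mult_tridiag_skew:
  fixes A :: "nat \<Rightarrow> 'a::real_inner \<Rightarrow> 'a" and b :: 'a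
  defines "C \<equiv> mult_tridiag (\<lambda>k l. inner (lz_q A b k) (lz_q A b l)) (lz_alpha A b) (lz_beta A b)"
  assumes A_sym: "\<And>u v. inner (A k u) v = inner u (A k v)" and kl: "1 \<le> k" "1 \<le> l"
  shows "C k l - C l k = inner (lz_q A b k) (A l (lz_q A b l) - A k (lz_q A b l))"
proof -
  have "C l k = inner (lz_q A b l) (A k (lz_q A b k))"
    unfolding C_def using kl by (simp add: lz_inner_A_eq_mult_tridiag)
  also have "\<dots> = inner (lz_q A b k) (A k (lz_q A b l))"
    by (simp only: A_sym[symmetric] inner_commute[of "A k (lz_q A b l)"])
  finally show ?thesis
    unfolding C_def using kl by (simp add: lz_inner_A_eq_mult_tridiag inner_diff_right)
qed

theorem lanczos_ritz_value_gap:
  fixes A :: "nat \<Rightarrow> 'a::real_inner \<Rightarrow> 'a" and b :: 'a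
    and mu :: "nat \<Rightarrow> nat \<Rightarrow> real" and Y :: "nat \<Rightarrow> nat \<Rightarrow> nat \<Rightarrow> real"
  assumes b: "b \<noteq> 0" and beta_nz: "\<And>k. 1 \<le> k \<Longrightarrow> k < m \<Longrightarrow> lz_beta A b (Suc k) \<noteq> 0"
    and j: "2 \<le> j" "j \<le> m"
    and A_sym: "\<And>k u v. inner (A k u) v = inner u (A k v)"
    and A_var: "\<And>k l v. k \<in> {1..j} \<Longrightarrow> l \<in> {1..j} \<Longrightarrow> norm (A l v - A k v) \<le> \<omega> * norm v"
    and eig: "\<And>n r k. 1 \<le> n \<Longrightarrow> n \<le> j \<Longrightarrow> r \<in> {1..n} \<Longrightarrow> k \<in> {1..n} \<Longrightarrow>
              (\<Sum>l = 1..n. lz_T A b k l * Y n r l) = mu n r * Y n r k"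
    and orth: "\<And>n r r'. 1 \<le> n \<Longrightarrow> n \<le> j \<Longrightarrow> r \<in> {1..n} \<Longrightarrow> r' \<in> {1..n} \<Longrightarrow>
              (\<Sum>k = 1..n. Y n r k * Y n r' k) = (if r = r' then 1 else 0)"
    and i: "i \<in> {1..j}"
  shows "\<exists>s n. 1 \<le> s \<and> s \<le> n \<and> n < j \<and>
    \<bar>mu j i - mu n s\<bar> * \<bar>\<Sum>k = 1..j. \<Sum>l = 1..j. Y j i k * lz_R A b k l * Y j i l\<bar>
      \<le> \<omega> * (real j)\<^sup>2 / 2"
proof -
  let ?q = "lz_q A b"
  let ?G = "\<lambda>k l. inner (?q k) (?q l)"
  have unit: "norm (?q k) = 1" if "1 \<le> k" "k \<le> j" for k
    using lz_q_unit[OF b beta_nz] that j by auto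
  interpret tridiag_gram ?G "lz_alpha A b" "lz_beta A b" j mu Y
  proof
    show "inner (?q k) (?q k) = 1" if "1 \<le> k" "k \<le> j" for k
      using unit[OF that] by (simp add: power2_norm_eq_inner[symmetric])
    show "inner (?q k) (?q (Suc k)) = 0" if "1 \<le> k" "k < j" for k
      using that unit by (intro lz_q_orthogonal_next) auto
    show "(\<Sum>l = 1..n. tridiag (lz_alpha A b) (lz_beta A b) k l * Y n r l) = mu n r * Y n r k"
      if "1 \<le> n" "n \<le> j" "r \<in> {1..n}" "k \<in> {1..n}" for n r k
      using eig[OF that] by (simp add: lz_T_eq_tridiag)
    show "(\<Sum>k = 1..n. Y n r k * Y n r' k) = (if r = r' then 1 else 0)"
      if "1 \<le> n" "n \<le> j" "r \<in> {1..n}" "r' \<in> {1..n}" for n r r'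
      using orth[OF that] .
  qed (simp_all add: inner_commute lz_beta_1)
  have "\<bar>mult_tridiag ?G (lz_alpha A b) (lz_beta A b) k l - mult_tridiag ?G (lz_alpha A b) (lz_beta A b) l k\<bar> \<le> \<omega>"
    if kl: "k \<in> {1..j}" "l \<in> {1..j}" for k l
  proof -
    have "\<bar>inner (?q k) (A l (?q l) - A k (?q l))\<bar> \<le> norm (?q k) * norm (A l (?q l) - A k (?q l))"
      by (rule Cauchy_Schwarz_ineq2)
    also have "\<dots> \<le> \<omega>"
      using A_var[OF kl, of "?q l"] unit kl by simp
    finally show ?thesis using kl by (simp add: lz_mult_tridiag_skew A_sym)
  qed
  from ritz_value_gap[OF this j(1) i] show ?thesis
    unfolding lz_R_eq_strict_upper .
qed

lemma gap_bound_relax: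
  fixes d r c :: real
  assumes "d * \<bar>r\<bar> \<le> c" "r \<noteq> 0" "0 \<le> c"
  shows "d \<le> 2 * c / (sqrt 3 * \<bar>r\<bar>)"
proof -
  have "sqrt 3 \<le> 2" using real_sqrt_le_mono[of 3 4] by simp
  then have "c * sqrt 3 \<le> c * 2" using assms(3) by (rule mult_left_mono)
  then have "c \<le> 2 * c / sqrt 3" by (simp add: le_divide_eq mult.commute)
  moreover have "d \<le> c / \<bar>r\<bar>" using assms(1,2) by (simp add: pos_le_divide_eq)
  ultimately have "d \<le> (2 * c / sqrt 3) / \<bar>r\<bar>"
    using assms(2) by (meson divide_right_mono abs_ge_zero order_trans)
  then show ?thesis by simp
qed

theorem lemmaF3:
  fixes g :: "'x::euclidean_space \<Rightarrow> 'y::euclidean_space \<Rightarrow> real"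
    and gx :: "'x \<Rightarrow> 'y \<Rightarrow> 'x" and gy :: "'x \<Rightarrow> 'y \<Rightarrow> 'y"
    and Dxx :: "'x \<Rightarrow> 'y \<Rightarrow> ('x \<Rightarrow>\<^sub>L 'x)" and Dxy :: "'x \<Rightarrow> 'y \<Rightarrow> ('y \<Rightarrow>\<^sub>L 'x)"
    and Dyx :: "'x \<Rightarrow> 'y \<Rightarrow> ('x \<Rightarrow>\<^sub>L 'y)" and Dyy :: "'x \<Rightarrow> 'y \<Rightarrow> ('y \<Rightarrow>\<^sub>L 'y)"
    and Lgx Lgy Lgxy Lgyy mug :: real
    and m j i :: nat
    and xs :: "nat \<Rightarrow> 'x" and ys :: "nat \<Rightarrow> 'y" and b :: 'y
    and mu :: "nat \<Rightarrow> nat \<Rightarrow> real" and Y :: "nat \<Rightarrow> nat \<Rightarrow> nat \<Rightarrow> real"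
  defines "A \<equiv> (\<lambda>k. blinfun_apply (Dyy (xs k) (ys k)))"
  \<comment> \<open>g is twice continuously differentiable (gradients gx, gy; Hessian blocks D..)\<close>
  assumes g_diff: "\<And>x y. ((\<lambda>p. g (fst p) (snd p)) has_derivative
                      (\<lambda>h. inner (gx x y) (fst h) + inner (gy x y) (snd h))) (at (x, y))"
    and gx_diff: "\<And>x y. ((\<lambda>p. gx (fst p) (snd p)) has_derivative
                      (\<lambda>h. Dxx x y (fst h) + Dxy x y (snd h))) (at (x, y))"
    and gy_diff: "\<And>x y. ((\<lambda>p. gy (fst p) (snd p)) has_derivative
                      (\<lambda>h. Dyx x y (fst h) + Dyy x y (snd h))) (at (x, y))"
    and Dxx_cont: "continuous_on UNIV (\<lambda>p. Dxx (fst p) (snd p))"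
    and Dxy_cont: "continuous_on UNIV (\<lambda>p. Dxy (fst p) (snd p))"
    and Dyx_cont: "continuous_on UNIV (\<lambda>p. Dyx (fst p) (snd p))"
    and Dyy_cont: "continuous_on UNIV (\<lambda>p. Dyy (fst p) (snd p))"
  \<comment> \<open>(A2)\<close>
    and A2_gx: "\<And>x y x' y'. norm (gx x y - gx x' y') \<le> Lgx * norm ((x, y) - (x', y'))"
    and A2_gy: "\<And>x y x' y'. norm (gy x y - gy x' y') \<le> Lgy * norm ((x, y) - (x', y'))"
    and A2_gxy: "\<And>x y x' y'. norm (Dxy x y - Dxy x' y') \<le> Lgxy * norm ((x, y) - (x', y'))"
    and A2_gyy: "\<And>x y x' y'. norm (Dyy x y - Dyy x' y') \<le> Lgyy * norm ((x, y) - (x', y'))"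
  \<comment> \<open>(A3)\<close>
    and mug_pos: "mug > 0"
    and A3: "\<And>x. convex_on UNIV (\<lambda>y. g x y - mug / 2 * (norm y)\<^sup>2)"
  \<comment> \<open>dynamic Lanczos setting\<close>
    and b_nz: "b \<noteq> 0"
    and beta_nz: "\<And>k. 1 \<le> k \<Longrightarrow> k < m \<Longrightarrow> lz_beta A b (Suc k) \<noteq> 0"
    and j_bounds: "2 \<le> j" "j \<le> m"
  \<comment> \<open>for 1 \<le> n \<le> j: T_n Y^(n) = Y^(n) diag(mu^(n)), Y^(n) orthogonal, mu^(n) strictly
      decreasing (T_n has distinct eigenvalues); Y n r k is the k-th entry of y_r^(n)\<close>
    and eig: "\<And>n r k. 1 \<le> n \<Longrightarrow> n \<le> j \<Longrightarrow> r \<in> {1..n} \<Longrightarrow> k \<in> {1..n} \<Longrightarrow>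
              (\<Sum>l = 1..n. lz_T A b k l * Y n r l) = mu n r * Y n r k"
    and orth: "\<And>n r r'. 1 \<le> n \<Longrightarrow> n \<le> j \<Longrightarrow> r \<in> {1..n} \<Longrightarrow> r' \<in> {1..n} \<Longrightarrow>
              (\<Sum>k = 1..n. Y n r k * Y n r' k) = (if r = r' then 1 else 0)"
    and decr: "\<And>n r. 1 \<le> n \<Longrightarrow> n \<le> j \<Longrightarrow> 1 \<le> r \<Longrightarrow> r < n \<Longrightarrow> mu n r > mu n (Suc r)"
    and i_bounds: "1 \<le> i" "i \<le> j"
    and yRy_nz: "(\<Sum>k = 1..j. \<Sum>l = 1..j. Y j i k * lz_R A b k l * Y j i l) \<noteq> 0"
  shows "\<exists>s n. 1 \<le> s \<and> s \<le> n \<and> n < j \<and>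
           \<bar>mu j i - mu n s\<bar> \<le>
             2 * real j ^ 2 * Lgyy * eps_j g Lgx mug xs ys j /
             (sqrt 3 * \<bar>\<Sum>k = 1..j. \<Sum>l = 1..j. Y j i k * lz_R A b k l * Y j i l\<bar>)"
proof -
  let ?eps = "eps_j g Lgx mug xs ys j"
  let ?yRy = "\<Sum>k = 1..j. \<Sum>l = 1..j. Y j i k * lz_R A b k l * Y j i l"
  have A_sym: "inner (A k u) v = inner u (A k v)" for k u v
    unfolding A_def by (rule partial_hessian_snd_symmetric[OF g_diff gy_diff Dyy_cont])
  have A_var: "norm (A l v - A k v) \<le> 2 * Lgyy * ?eps * norm v"
    if "k \<in> {1..j}" "l \<in> {1..j}" for k l v
    using order_trans[OF norm_blinfun mult_right_mono[OF
        hessian_variation_le_eps_j[OF g_diff A2_gx A2_gyy mug_pos A3 that(2,1)] norm_ge_zero]]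
    by (simp add: A_def blinfun.diff_left)
  have "i \<in> {1..j}" using i_bounds by simp
  from lanczos_ritz_value_gap[OF b_nz beta_nz j_bounds A_sym A_var eig orth this]
  obtain s n where sn: "1 \<le> s" "s \<le> n" "n < j"
    and gap: "\<bar>mu j i - mu n s\<bar> * \<bar>?yRy\<bar> \<le> real j ^ 2 * Lgyy * ?eps"
    by (auto simp: mult_ac)
  have "0 \<le> real j ^ 2 * Lgyy * ?eps"
    using lipschitz_constant_nonneg[OF A2_gyy] lipschitz_constant_nonneg[OF A2_gx] mug_pos j_bounds
    by (simp add: eps_j_nonneg)
  with gap yRy_nz have "\<bar>mu j i - mu n s\<bar> \<le> 2 * (real j ^ 2 * Lgyy * ?eps) / (sqrt 3 * \<bar>?yRy\<bar>)"
    by (rule gap_bound_relax)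
  with sn show ?thesis by (auto simp: mult_ac)
qed

end
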